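(* Let $m\in\mathbb{N}\setminus\{1\}$, let $0<p<q\leq\infty$ and put $\alpha=1/p-1/q$. For each $i\in\{1,\dots,m\}$ let $X_{i},Y_{i}$ be quasi-Banach spaces and $T_{i}:X_i\to Y_i$ a bounded linear operator. Suppose that $e_{s}(T_{i})\leq (m/s)^{\alpha}$ for all $i,s\in\{1,\dots,m\}$. Let $T:l_{p}^{m}(\{X_{i}\}_{i=1}^m)\rightarrow l_{q}^{m}(\{Y_{i}\}_{i=1}^m)$ be the linear operator $T(x)=(T_{1}(x_{1}),\dots,T_{m}(x_{m}))$ for $x=(x_{1},\dots,x_{m})\in X_1\times\dots\times X_m$. Then $e_{5m}(T)\leq 3^{1/q}$.
   Context: For quasi-Banach spaces $X_1,\dots,X_m$ and $0<p\le\infty$, $l_p^m(\{X_i\}_{i=1}^m)$ is the space of tuples $x=(x_1,\dots,x_m)$, $x_i\in X_i$, with quasi-norm $(\sum_{i=1}^m\|x_i\|_{X_i}^p)^{1/p}$ (and $\max_i\|x_i\|_{X_i}$ if $p=\infty$). For a bounded linear operator $S:X\to Y$ between quasi-Banach spaces and $n\in\mathbb{N}$, the entropy number $e_n(S)$ is the infimum of $\varepsilon>0$ such that $S(B_X)$ ($B_X$ the closed unit ball of $X$) can be covered by $2^{n-1}$ balls in $Y$ of radius $\varepsilon$. Convention $3^{1/\infty}=1$. *)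

theory Defs
  imports "HOL-Analysis.Analysis"
begin

definition quasi_normed :: "'a::real_vector set \<Rightarrow> ('a \<Rightarrow> real) \<Rightarrow> bool" where
  "quasi_normed V N \<longleftrightarrow> subspace V \<and>
     (\<forall>x\<in>V. 0 \<le> N x) \<and> (\<forall>x\<in>V. N x = 0 \<longleftrightarrow> x = 0) \<and>
     (\<forall>x\<in>V. \<forall>c. N (c *\<^sub>R x) = \<bar>c\<bar> * N x) \<and>
     (\<exists>K\<ge>1. \<forall>x\<in>V. \<forall>y\<in>V. N (x + y) \<le> K * (N x + N y))"

definition quasi_banach :: "'a::real_vector set \<Rightarrow> ('a \<Rightarrow> real) \<Rightarrow> bool" where
  "quasi_banach V N \<longleftrightarrow> quasi_normed V N \<and>
     (\<forall>f. (\<forall>n. f n \<in> V) \<and> (\<forall>e>0. \<exists>K. \<forall>i j. K \<le> i \<and> K \<le> j \<longrightarrow> N (f i - f j) < e)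
          \<longrightarrow> (\<exists>x\<in>V. (\<lambda>n. N (f n - x)) \<longlonglongrightarrow> 0))"

definition bounded_linear_op ::
  "'a::real_vector set \<Rightarrow> ('a \<Rightarrow> real) \<Rightarrow> 'b::real_vector set \<Rightarrow> ('b \<Rightarrow> real) \<Rightarrow> ('a \<Rightarrow> 'b) \<Rightarrow> bool" where
  "bounded_linear_op V N W M S \<longleftrightarrow> (\<forall>x\<in>V. S x \<in> W) \<and>
     (\<forall>x\<in>V. \<forall>y\<in>V. S (x + y) = S x + S y) \<and> (\<forall>x\<in>V. \<forall>c. S (c *\<^sub>R x) = c *\<^sub>R S x) \<and>
     (\<exists>C. \<forall>x\<in>V. M (S x) \<le> C * N x)"

definition entropy_number ::
  "'a set \<Rightarrow> ('a \<Rightarrow> real) \<Rightarrow> 'b::minus set \<Rightarrow> ('b \<Rightarrow> real) \<Rightarrow> ('a \<Rightarrow> 'b) \<Rightarrow> nat \<Rightarrow> real" where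
  "entropy_number V N W M S n = Inf {eps. eps > 0 \<and>
     (\<exists>C. finite C \<and> card C \<le> 2 ^ (n - 1) \<and> C \<subseteq> W \<and>
          S ` {x\<in>V. N x \<le> 1} \<subseteq> (\<Union>c\<in>C. {y\<in>W. M (y - c) \<le> eps}))}"

definition lp_carrier :: "nat \<Rightarrow> (nat \<Rightarrow> 'a::zero set) \<Rightarrow> (nat \<Rightarrow> 'a) set" where
  "lp_carrier m V = {x. (\<forall>i\<in>{1..m}. x i \<in> V i) \<and> (\<forall>i. i \<notin> {1..m} \<longrightarrow> x i = 0)}"

definition lp_qnorm :: "ereal \<Rightarrow> nat \<Rightarrow> (nat \<Rightarrow> 'a \<Rightarrow> real) \<Rightarrow> (nat \<Rightarrow> 'a) \<Rightarrow> real" where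
  "lp_qnorm r m N x = (if r = \<infinity> then Max ((\<lambda>i. N i (x i)) ` {1..m})
     else (\<Sum>i=1..m. N i (x i) powr real_of_ereal r) powr (1 / real_of_ereal r))"

definition inv_exp :: "ereal \<Rightarrow> real" where
  "inv_exp r = (if r = \<infinity> then 0 else 1 / real_of_ereal r)"

end

theory Submission
  imports Defs
begin

text \<open>For x in the unit ball of l_p^m, round m \<parallel>x_i\<parallel>^p up to a level s_i \<in> {1..m}; then
  \<Sum> s_i \<le> 2m and \<parallel>x_i\<parallel> \<le> (s_i/m)^(1/p). Covering T_i(B_{X_i}) by 2^(s_i - 1) balls of
  radius slightly above (m/s_i)^(1/p - 1/q) and rescaling by (s_i/m)^(1/p) approximates T_i x_i within
  (s_i/m)^(1/q), so the l_q-error is at most (\<Sum> s_i/m)^(1/q) \<le> 2^(1/q). There are at most 4^m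
  level tuples and, for each, at most 2^(\<Sum> s_i) \<le> 4^m choices of centres, and
  2^(4m) \<le> 2^(5m - 1).\<close>

lemma sum_half_powers_le_1: "(\<Sum>j=1..n. (1/2::real) ^ j) \<le> 1"
proof -
  have "(\<Sum>j=1..n. (1/2::real) ^ j) = 1 - (1/2) ^ n"
    by (induction n) (auto simp: sum.atLeast1_atMost_eq)
  thus ?thesis by simp
qed

lemma card_PiE_sum_le:
  fixes A :: "'i set"
  assumes "finite A"
  shows "card {s \<in> A \<rightarrow>\<^sub>E {1..n::nat}. sum s A \<le> k} \<le> 2 ^ k"
proof -
  define P where "P = A \<rightarrow>\<^sub>E {1..n}"
  define S where "S = {s \<in> P. sum s A \<le> k}"
  \<comment> \<open>Weigh each tuple s by \<Prod> 2^(-s_i): admissible tuples weigh at least 2^(-k), all tuples together at most 1.\<close>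
  define w where "w s = (\<Prod>i\<in>A. (1/2::real) ^ s i)" for s
  have finP: "finite P" unfolding P_def using assms by (simp add: finite_PiE)
  have "1 \<le> 2 ^ k * w s" if "s \<in> S" for s
  proof -
    have "(1/2::real) ^ k \<le> (1/2) ^ sum s A"
      using that by (intro power_decreasing) (auto simp: S_def)
    also have "\<dots> = w s" by (simp add: w_def power_sum)
    finally show ?thesis by (simp add: field_simps)
  qed
  hence "real (card S) \<le> (\<Sum>s\<in>S. 2 ^ k * w s)"
    using sum_mono[of S "\<lambda>_. 1::real"] by simp
  also have "\<dots> \<le> (\<Sum>s\<in>P. 2 ^ k * w s)"
    by (rule sum_mono2[OF finP]) (auto simp: S_def w_def intro!: mult_nonneg_nonneg prod_nonneg)
  also have "\<dots> = 2 ^ k * (\<Prod>i\<in>A. \<Sum>j=1..n. (1/2::real) ^ j)"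
    unfolding P_def w_def sum_distrib_left[symmetric]
    using prod_sum_PiE[OF assms, of "\<lambda>_. {1..n}" "\<lambda>_ j. (1/2::real) ^ j"] by simp
  also have "\<dots> \<le> 2 ^ k"
    using prod_le_1[of A "\<lambda>_. \<Sum>j=1..n. (1/2::real) ^ j"] sum_half_powers_le_1[of n]
    by (simp add: sum_nonneg)
  finally show ?thesis unfolding S_def P_def by (simp flip: of_nat_le_iff)
qed

lemma quasi_normedD:
  assumes "quasi_normed V N"
  shows "subspace V" and "x \<in> V \<Longrightarrow> 0 \<le> N x" and "x \<in> V \<Longrightarrow> N (c *\<^sub>R x) = \<bar>c\<bar> * N x"
  using assms unfolding quasi_normed_def by auto

lemma bounded_linear_opD:
  assumes "bounded_linear_op V N W M S"
  shows "x \<in> V \<Longrightarrow> S x \<in> W" and "x \<in> V \<Longrightarrow> S (c *\<^sub>R x) = c *\<^sub>R S x"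
    and "\<exists>K. \<forall>x\<in>V. M (S x) \<le> K * N x"
  using assms unfolding bounded_linear_op_def by auto

lemma entropy_number_le:
  assumes "0 \<le> B"
    and cover: "\<And>eps. B < eps \<Longrightarrow> \<exists>C. finite C \<and> card C \<le> 2 ^ (n - 1) \<and> C \<subseteq> W \<and>
                   S ` {x\<in>V. N x \<le> 1} \<subseteq> (\<Union>c\<in>C. {y\<in>W. M (y - c) \<le> eps})"
  shows "entropy_number V N W M S n \<le> B"
  unfolding entropy_number_def
proof (rule dense_ge)
  fix eps assume "B < eps"
  let ?E = "{eps. eps > 0 \<and> (\<exists>C. finite C \<and> card C \<le> 2 ^ (n - 1) \<and> C \<subseteq> W \<and>
          S ` {x\<in>V. N x \<le> 1} \<subseteq> (\<Union>c\<in>C. {y\<in>W. M (y - c) \<le> eps}))}"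
  have "eps \<in> ?E" using \<open>B < eps\<close> assms(1) cover[OF \<open>B < eps\<close>] by auto
  moreover have "bdd_below ?E" by (rule bdd_belowI[of _ 0]) simp
  ultimately show "Inf ?E \<le> eps" by (rule cInf_lower)
qed

lemma entropy_number_less_cover:
  assumes V: "quasi_normed V N" and W: "quasi_normed W M" and S: "bounded_linear_op V N W M S"
    and less: "entropy_number V N W M S n < z"
  obtains C where "finite C" "card C \<le> 2 ^ (n - 1)" "C \<subseteq> W"
    "S ` {x\<in>V. N x \<le> 1} \<subseteq> (\<Union>c\<in>C. {y\<in>W. M (y - c) \<le> z})"
proof -
  define Cov where "Cov eps \<longleftrightarrow> (\<exists>C. finite C \<and> card C \<le> 2 ^ (n - 1) \<and> C \<subseteq> W \<and>
      S ` {x\<in>V. N x \<le> 1} \<subseteq> (\<Union>c\<in>C. {y\<in>W. M (y - c) \<le> eps}))" for eps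
  obtain K where K: "\<And>x. x \<in> V \<Longrightarrow> M (S x) \<le> K * N x"
    using bounded_linear_opD(3)[OF S] by blast
  have "S x \<in> {y\<in>W. M (y - 0) \<le> 1 + \<bar>K\<bar>}" if x: "x \<in> V" "N x \<le> 1" for x
  proof -
    have "M (S x) \<le> K * N x" by (rule K[OF x(1)])
    also have "\<dots> \<le> \<bar>K\<bar> * N x"
      by (rule mult_right_mono[OF abs_ge_self quasi_normedD(2)[OF V x(1)]])
    also have "\<dots> \<le> 1 + \<bar>K\<bar>" using x(2) mult_left_mono[of "N x" 1 "\<bar>K\<bar>"] by simp
    finally show ?thesis using bounded_linear_opD(1)[OF S x(1)] by simp
  qed
  \<comment> \<open>The infimum ranges over a nonempty set: by boundedness one ball around 0 is a cover.\<close>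
  hence "Cov (1 + \<bar>K\<bar>)"
    unfolding Cov_def using subspace_0[OF quasi_normedD(1)[OF W]]
    by (intro exI[of _ "{0}"] conjI) (simp_all add: image_subset_iff)
  hence "{eps. eps > 0 \<and> Cov eps} \<noteq> {}"
    by (intro ex_in_conv[THEN iffD1] exI[of _ "1 + \<bar>K\<bar>"]) (simp add: add_pos_nonneg)
  from cInf_lessD[OF this less[unfolded entropy_number_def, folded Cov_def]]
  obtain eps where "Cov eps" "eps < z" by blast
  then obtain C where C: "finite C" "card C \<le> 2 ^ (n - 1)" "C \<subseteq> W"
    and cov: "S ` {x\<in>V. N x \<le> 1} \<subseteq> (\<Union>c\<in>C. {y\<in>W. M (y - c) \<le> eps})"
    unfolding Cov_def by blast
  have "(\<Union>c\<in>C. {y\<in>W. M (y - c) \<le> eps}) \<subseteq> (\<Union>c\<in>C. {y\<in>W. M (y - c) \<le> z})"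
    using \<open>eps < z\<close> by auto
  from C subset_trans[OF cov this] show ?thesis by (rule that)
qed

lemma scaled_cover:
  assumes V: "quasi_normed V N" and W: "quasi_normed W M" and S: "bounded_linear_op V N W M S"
    and C: "C \<subseteq> W" and cov: "S ` {x\<in>V. N x \<le> 1} \<subseteq> (\<Union>c\<in>C. {y\<in>W. M (y - c) \<le> e})"
    and x: "x \<in> V" "N x \<le> t" "0 < t"
  obtains c where "c \<in> C" "M (S x - t *\<^sub>R c) \<le> t * e"
proof -
  define z where "z = (1 / t) *\<^sub>R x"
  have zV: "z \<in> V" unfolding z_def by (rule subspace_scale[OF quasi_normedD(1)[OF V] x(1)])
  have "N z = N x / t" using quasi_normedD(3)[OF V x(1)] x(3) by (simp add: z_def)
  hence "N z \<le> 1" using x(2,3) by simp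
  then obtain c where c: "c \<in> C" "M (S z - c) \<le> e" using cov zV by blast
  have "S x = t *\<^sub>R S z" using bounded_linear_opD(2)[OF S zV, of t] x(3) by (simp add: z_def)
  hence "S x - t *\<^sub>R c = t *\<^sub>R (S z - c)" by (simp add: scaleR_diff_right)
  moreover have "S z - c \<in> W"
    using subspace_diff[OF quasi_normedD(1)[OF W] bounded_linear_opD(1)[OF S zV]] c(1) C by blast
  ultimately have "M (S x - t *\<^sub>R c) = t * M (S z - c)" using quasi_normedD(3)[OF W] x(3) by simp
  also have "\<dots> \<le> t * e" using c(2) x(3) by simp
  finally show ?thesis using c(1) by (rule that[rotated])
qed

definition level_tuples :: "nat \<Rightarrow> (nat \<Rightarrow> nat) set" where
  "level_tuples m = {s \<in> {1..m} \<rightarrow>\<^sub>E {1..m}. (\<Sum>i=1..m. s i) \<le> 2 * m}"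

lemma level_tuples_range: "s \<in> level_tuples m \<Longrightarrow> i \<in> {1..m} \<Longrightarrow> s i \<in> {1..m}"
  unfolding level_tuples_def by blast

lemma finite_level_tuples: "finite (level_tuples m)"
  unfolding level_tuples_def by (rule finite_subset[of _ "{1..m} \<rightarrow>\<^sub>E {1..m}"]) (auto simp: finite_PiE)

lemma card_level_tuples: "card (level_tuples m) \<le> 4 ^ m"
  using card_PiE_sum_le[of "{1..m}" m "2 * m"] by (simp add: level_tuples_def power_mult)

lemma exists_level_tuple:
  fixes r :: "nat \<Rightarrow> real"
  assumes r0: "\<And>i. i \<in> {1..m} \<Longrightarrow> 0 \<le> r i" and r_sum: "(\<Sum>i=1..m. r i) \<le> 1"
  obtains s where "s \<in> level_tuples m" "\<And>i. i \<in> {1..m} \<Longrightarrow> r i * m \<le> s i"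
proof -
  define s where "s = restrict (\<lambda>i. max 1 (nat \<lceil>r i * m\<rceil>)) {1..m}"
  have s: "s i \<in> {1..m}" "r i * m \<le> s i" "s i \<le> r i * m + 1" if i: "i \<in> {1..m}" for i
  proof -
    have "r i \<le> 1" using member_le_sum[OF i, of r] r0 r_sum by auto
    hence "r i * m \<le> m" by (simp add: mult_left_le_one_le r0[OF i])
    moreover have "0 \<le> r i * m" using r0[OF i] by simp
    ultimately show "s i \<in> {1..m}" "s i \<le> r i * m + 1"
      using i ceiling_correct[of "r i * m"] by (auto simp: s_def of_nat_max nat_le_iff ceiling_le_iff)
    have "r i * m \<le> real (nat \<lceil>r i * m\<rceil>)"
      using \<open>0 \<le> r i * m\<close> le_of_int_ceiling[of "r i * m"] by linarith
    thus "r i * m \<le> s i" using i by (simp add: s_def of_nat_max)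
  qed
  have "real (\<Sum>i=1..m. s i) \<le> (\<Sum>i=1..m. r i * m + 1)"
    unfolding of_nat_sum by (rule sum_mono) (rule s(3))
  also have "\<dots> = (\<Sum>i=1..m. r i) * m + m" by (simp add: sum.distrib sum_distrib_right)
  also have "\<dots> \<le> 2 * m" using r_sum mult_right_mono[OF r_sum, of "real m"] by simp
  finally have "real (\<Sum>i=1..m. s i) \<le> real (2 * m)" by simp
  hence "(\<Sum>i=1..m. s i) \<le> 2 * m" by (simp only: of_nat_le_iff)
  moreover have "s \<in> {1..m} \<rightarrow>\<^sub>E {1..m}" using s(1) by (simp add: s_def)
  ultimately have "s \<in> level_tuples m" by (simp add: level_tuples_def)
  from this s(2) show ?thesis by (rule that)
qed

lemma lp_qnorm_le_1_sum:
  assumes "0 < r" and "lp_qnorm (ereal r) m N x \<le> 1"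
  shows "(\<Sum>i=1..m. N i (x i) powr r) \<le> 1"
proof -
  define \<sigma> where "\<sigma> = (\<Sum>i=1..m. N i (x i) powr r)"
  have "\<sigma> powr (1 / r) \<le> 1" using assms(2) by (simp add: lp_qnorm_def \<sigma>_def)
  moreover have "0 \<le> \<sigma>" unfolding \<sigma>_def by (simp add: sum_nonneg)
  ultimately have "(\<sigma> powr (1 / r)) powr r \<le> 1 powr r"
    using assms(1) by (intro powr_mono2) auto
  with \<open>0 \<le> \<sigma>\<close> assms(1) show ?thesis by (simp add: \<sigma>_def powr_powr)
qed

lemma lp_unit_ball_level_tuple:
  assumes r: "0 < r" and N0: "\<And>i. i \<in> {1..m} \<Longrightarrow> 0 \<le> N i (x i)"
    and x1: "lp_qnorm (ereal r) m N x \<le> 1"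
  obtains s where "s \<in> level_tuples m" "\<And>i. i \<in> {1..m} \<Longrightarrow> N i (x i) \<le> (real (s i) / m) powr (1 / r)"
proof -
  obtain s where s: "s \<in> level_tuples m" and s_ge: "\<And>i. i \<in> {1..m} \<Longrightarrow> N i (x i) powr r * m \<le> s i"
    using exists_level_tuple[OF _ lp_qnorm_le_1_sum[OF r x1]] by auto
  have "N i (x i) \<le> (real (s i) / m) powr (1 / r)" if i: "i \<in> {1..m}" for i
  proof -
    have "N i (x i) = (N i (x i) powr r) powr (1 / r)"
      using N0[OF i] r by (simp add: powr_powr)
    also have "\<dots> \<le> (real (s i) / m) powr (1 / r)"
      using s_ge[OF i] i r by (intro powr_mono2) (auto simp: field_simps)
    finally show ?thesis .
  qed
  with s show ?thesis by (rule that)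
qed

lemma lp_qnorm_le_weighted:
  assumes q: "0 < q" and m: "1 \<le> m" and c: "0 \<le> c"
    and e0: "\<And>i. i \<in> {1..m} \<Longrightarrow> 0 \<le> N i (y i)"
    and e_le: "\<And>i. i \<in> {1..m} \<Longrightarrow> N i (y i) \<le> c * w i powr inv_exp q"
    and w0: "\<And>i. i \<in> {1..m} \<Longrightarrow> 0 < w i" and w_sum: "(\<Sum>i=1..m. w i) \<le> W"
  shows "lp_qnorm q m N y \<le> c * W powr inv_exp q"
proof (cases "q = \<infinity>")
  case True
  have "0 < (\<Sum>i=1..m. w i)" using m w0 by (intro sum_pos) auto
  hence "0 < W" using w_sum by linarith
  have "N i (y i) \<le> c" if "i \<in> {1..m}" for i
    using e_le[OF that] w0[OF that] by (simp add: True inv_exp_def)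
  hence "Max ((\<lambda>i. N i (y i)) ` {1..m}) \<le> c"
    using m by (subst Max_le_iff) auto
  thus ?thesis using True \<open>0 < W\<close> by (simp add: lp_qnorm_def inv_exp_def)
next
  case False
  then obtain r where r: "q = ereal r" "0 < r" using q by (cases q) auto
  have iq: "inv_exp q = 1 / r" using r by (simp add: inv_exp_def)
  have "0 \<le> W" using w_sum sum_nonneg[of "{1..m}" w] w0 by (meson less_imp_le order_trans)
  have "(\<Sum>i=1..m. N i (y i) powr r) \<le> (\<Sum>i=1..m. c powr r * w i)"
  proof (rule sum_mono)
    fix i assume i: "i \<in> {1..m}"
    have "N i (y i) powr r \<le> (c * w i powr (1 / r)) powr r"
      using e0[OF i] e_le[OF i] r(2) by (intro powr_mono2) (auto simp: iq)
    also have "\<dots> = c powr r * w i"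
      using c w0[OF i] r(2) by (simp add: powr_mult powr_powr)
    finally show "N i (y i) powr r \<le> c powr r * w i" .
  qed
  also have "\<dots> \<le> c powr r * W"
    using w_sum by (simp add: sum_distrib_left[symmetric] mult_left_mono)
  finally have "(\<Sum>i=1..m. N i (y i) powr r) powr (1 / r) \<le> (c powr r * W) powr (1 / r)"
    using r(2) by (intro powr_mono2) (auto intro: sum_nonneg)
  also have "\<dots> = c * W powr (1 / r)"
    using c \<open>0 \<le> W\<close> r(2) by (simp add: powr_mult powr_powr)
  finally show ?thesis using r(1) iq by (simp add: lp_qnorm_def)
qed

text \<open>The centres of the cover of the diagonal operator: for a level tuple s, the i-th
  component is a centre of the cover of T_i(B_{X_i}) by 2^(s_i - 1) balls, rescaled to the
  ball of radius (s_i/m)^(1/p) in X_i that contains x_i.\<close>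
definition diag_centres :: "nat \<Rightarrow> real \<Rightarrow> (nat \<Rightarrow> nat \<Rightarrow> 'b::real_vector set) \<Rightarrow> (nat \<Rightarrow> 'b) set" where
  "diag_centres m r Cf = (\<Union>s\<in>level_tuples m.
     (\<lambda>g i. if i \<in> {1..m} then (real (s i) / m) powr (1 / r) *\<^sub>R g i else 0) `
       (PiE {1..m} (\<lambda>i. Cf i (s i))))"

lemma card_diag_centres:
  assumes Cf: "\<And>i k. i \<in> {1..m} \<Longrightarrow> k \<in> {1..m} \<Longrightarrow> finite (Cf i k) \<and> card (Cf i k) \<le> 2 ^ (k - 1)"
  shows "finite (diag_centres m r Cf)" and "card (diag_centres m r Cf) \<le> 2 ^ (4 * m)"
proof -
  define P where "P s = PiE {1..m} (\<lambda>i. Cf i (s i))" for s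
  have finP: "finite (P s)" if "s \<in> level_tuples m" for s
    unfolding P_def using Cf level_tuples_range[OF that] by (intro finite_PiE) auto
  show "finite (diag_centres m r Cf)"
    unfolding diag_centres_def P_def[symmetric] using finite_level_tuples finP by blast
  have "card (diag_centres m r Cf) \<le> (\<Sum>s\<in>level_tuples m. card (P s))"
    unfolding diag_centres_def P_def[symmetric]
    by (rule order_trans[OF card_UN_le[OF finite_level_tuples]])
       (intro sum_mono card_image_le finP)
  also have "\<dots> \<le> (\<Sum>s\<in>level_tuples m. \<Prod>i\<in>{1..m}. 2 ^ s i)"
    unfolding P_def card_PiE[OF finite_atLeastAtMost]
  proof (intro sum_mono prod_mono conjI)
    fix s i assume "s \<in> level_tuples m" "i \<in> {1..m}"
    with Cf level_tuples_range have "card (Cf i (s i)) \<le> 2 ^ (s i - 1)" by blast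
    also have "\<dots> \<le> 2 ^ s i" by (intro power_increasing) auto
    finally show "card (Cf i (s i)) \<le> 2 ^ s i" .
  qed simp
  also have "\<dots> \<le> (\<Sum>s\<in>level_tuples m. 2 ^ (2 * m))"
    by (intro sum_mono) (auto simp: power_sum[symmetric] level_tuples_def intro: power_increasing)
  also have "\<dots> \<le> 4 ^ m * 4 ^ m"
    using card_level_tuples[of m] by (simp add: power_mult)
  also have "\<dots> = 2 ^ (4 * m)"
    by (simp add: power_mult power_mult_distrib[symmetric])
  finally show "card (diag_centres m r Cf) \<le> 2 ^ (4 * m)" .
qed

lemma diag_centres_subset:
  assumes "\<And>i. i \<in> {1..m} \<Longrightarrow> subspace (V i)"
    and "\<And>i k. i \<in> {1..m} \<Longrightarrow> k \<in> {1..m} \<Longrightarrow> Cf i k \<subseteq> V i"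
  shows "diag_centres m r Cf \<subseteq> lp_carrier m V"
proof
  fix c assume "c \<in> diag_centres m r Cf"
  then obtain s g where s: "s \<in> level_tuples m" and g: "g \<in> PiE {1..m} (\<lambda>i. Cf i (s i))"
    and c: "c = (\<lambda>i. if i \<in> {1..m} then (real (s i) / m) powr (1 / r) *\<^sub>R g i else 0)"
    unfolding diag_centres_def by blast
  have "g i \<in> V i" if "i \<in> {1..m}" for i
    using assms(2)[OF that level_tuples_range[OF s that]] PiE_mem[OF g that] by blast
  thus "c \<in> lp_carrier m V"
    using assms(1) unfolding c lp_carrier_def by (auto intro: subspace_scale)
qed

lemma diag_cover:
  fixes Tc :: "nat \<Rightarrow> 'a::real_vector \<Rightarrow> 'b::real_vector"
  assumes m: "1 \<le> m" and r: "0 < r" and q: "0 < q" and \<rho>: "0 \<le> \<rho>"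
    and X: "\<And>i. i \<in> {1..m} \<Longrightarrow> quasi_normed (VX i) (NX i)"
    and Y: "\<And>i. i \<in> {1..m} \<Longrightarrow> quasi_normed (VY i) (NY i)"
    and T: "\<And>i. i \<in> {1..m} \<Longrightarrow> bounded_linear_op (VX i) (NX i) (VY i) (NY i) (Tc i)"
    and Cf_sub: "\<And>i k. i \<in> {1..m} \<Longrightarrow> k \<in> {1..m} \<Longrightarrow> Cf i k \<subseteq> VY i"
    and Cf_cover: "\<And>i k. i \<in> {1..m} \<Longrightarrow> k \<in> {1..m} \<Longrightarrow>
       Tc i ` {x\<in>VX i. NX i x \<le> 1}
         \<subseteq> (\<Union>c\<in>Cf i k. {y\<in>VY i. NY i (y - c) \<le> \<rho> * (real m / k) powr (1 / r - inv_exp q)})"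
  shows "(\<lambda>x i. if i \<in> {1..m} then Tc i (x i) else 0) ` {x\<in>lp_carrier m VX. lp_qnorm (ereal r) m NX x \<le> 1}
           \<subseteq> (\<Union>c\<in>diag_centres m r Cf. {y\<in>lp_carrier m VY. lp_qnorm q m NY (y - c) \<le> \<rho> * 2 powr inv_exp q})"
proof clarify
  fix x assume xV: "x \<in> lp_carrier m VX" and x1: "lp_qnorm (ereal r) m NX x \<le> 1"
  have xi: "x i \<in> VX i" if "i \<in> {1..m}" for i using xV that by (simp add: lp_carrier_def)
  obtain s where s: "s \<in> level_tuples m"
    and x_le: "\<And>i. i \<in> {1..m} \<Longrightarrow> NX i (x i) \<le> (real (s i) / m) powr (1 / r)"
    using lp_unit_ball_level_tuple[OF r _ x1] quasi_normedD(2)[OF X xi] by metis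
  have s1: "s i \<in> {1..m}" if "i \<in> {1..m}" for i by (rule level_tuples_range[OF s that])
  define t where "t i = (real (s i) / m) powr (1 / r)" for i
  have t0: "0 < t i" if "i \<in> {1..m}" for i using s1[OF that] by (simp add: t_def)
  \<comment> \<open>The choice of t makes the radius (m/s_i)^(1/p - 1/q) of the i-th cover collapse to (s_i/m)^(1/q).\<close>
  have radius: "t i * (\<rho> * (real m / s i) powr (1 / r - inv_exp q)) = \<rho> * (real (s i) / m) powr inv_exp q"
    if i: "i \<in> {1..m}" for i
    using s1[OF i] m by (simp add: t_def powr_diff powr_divide field_simps powr_add[symmetric])
  have "\<exists>c. c \<in> Cf i (s i) \<and> NY i (Tc i (x i) - t i *\<^sub>R c) \<le> \<rho> * (real (s i) / m) powr inv_exp q"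
    if i: "i \<in> {1..m}" for i
    using scaled_cover[OF X[OF i] Y[OF i] T[OF i] Cf_sub[OF i s1[OF i]] Cf_cover[OF i s1[OF i]]
        xi[OF i] x_le[OF i, folded t_def] t0[OF i]] radius[OF i] by metis
  then obtain g where g: "\<And>i. i \<in> {1..m} \<Longrightarrow> g i \<in> Cf i (s i) \<and>
      NY i (Tc i (x i) - t i *\<^sub>R g i) \<le> \<rho> * (real (s i) / m) powr inv_exp q"
    by metis
  define c where "c = (\<lambda>i. if i \<in> {1..m} then t i *\<^sub>R g i else 0)"
  have "c \<in> diag_centres m r Cf"
    unfolding diag_centres_def using s g
    by (intro UN_I[of s] image_eqI[of _ _ "restrict g {1..m}"]) (auto simp: c_def t_def)
  moreover have "(\<lambda>i. if i \<in> {1..m} then Tc i (x i) else 0) \<in> lp_carrier m VY"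
    using bounded_linear_opD(1)[OF T xi] by (simp add: lp_carrier_def)
  moreover have "lp_qnorm q m NY ((\<lambda>i. if i \<in> {1..m} then Tc i (x i) else 0) - c) \<le> \<rho> * 2 powr inv_exp q"
  proof (rule lp_qnorm_le_weighted[OF q m \<rho>, where w = "\<lambda>i. real (s i) / m"])
    fix i assume i: "i \<in> {1..m}"
    have "g i \<in> VY i" using Cf_sub[OF i s1[OF i]] g[OF i] by blast
    hence "Tc i (x i) - t i *\<^sub>R g i \<in> VY i"
      using quasi_normedD(1)[OF Y[OF i]] bounded_linear_opD(1)[OF T[OF i] xi[OF i]]
      by (intro subspace_diff subspace_scale)
    then show "0 \<le> NY i (((\<lambda>i. if i \<in> {1..m} then Tc i (x i) else 0) - c) i)"
      using quasi_normedD(2)[OF Y[OF i]] i by (simp add: c_def)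
    show "NY i (((\<lambda>i. if i \<in> {1..m} then Tc i (x i) else 0) - c) i)
        \<le> \<rho> * (real (s i) / m) powr inv_exp q"
      using g[OF i] i by (simp add: c_def)
    show "0 < real (s i) / m" using s1[OF i] by simp
  next
    have "(\<Sum>i=1..m. real (s i) / m) = real (\<Sum>i=1..m. s i) / m"
      by (simp add: sum_divide_distrib)
    also have "\<dots> \<le> real (2 * m) / m"
      using s unfolding level_tuples_def by (intro divide_right_mono of_nat_mono) auto
    also have "\<dots> = 2" using m by simp
    finally show "(\<Sum>i=1..m. real (s i) / m) \<le> 2" .
  qed
  ultimately show "(\<lambda>i. if i \<in> {1..m} then Tc i (x i) else 0)
      \<in> (\<Union>c\<in>diag_centres m r Cf. {y\<in>lp_carrier m VY. lp_qnorm q m NY (y - c) \<le> \<rho> * 2 powr inv_exp q})"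
    by blast
qed

lemma entropy_number_diag_le:
  fixes Tc :: "nat \<Rightarrow> 'a::real_vector \<Rightarrow> 'b::real_vector"
  assumes m: "1 \<le> m" and r: "0 < r" and q: "0 < q"
    and X: "\<And>i. i \<in> {1..m} \<Longrightarrow> quasi_normed (VX i) (NX i)"
    and Y: "\<And>i. i \<in> {1..m} \<Longrightarrow> quasi_normed (VY i) (NY i)"
    and T: "\<And>i. i \<in> {1..m} \<Longrightarrow> bounded_linear_op (VX i) (NX i) (VY i) (NY i) (Tc i)"
    and ent: "\<And>i k. i \<in> {1..m} \<Longrightarrow> k \<in> {1..m} \<Longrightarrow>
       entropy_number (VX i) (NX i) (VY i) (NY i) (Tc i) k \<le> (real m / k) powr (1 / r - inv_exp q)"
  shows "entropy_number (lp_carrier m VX) (lp_qnorm (ereal r) m NX) (lp_carrier m VY) (lp_qnorm q m NY)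
           (\<lambda>x i. if i \<in> {1..m} then Tc i (x i) else 0) (5 * m) \<le> 2 powr inv_exp q"
proof (rule entropy_number_le)
  fix eps assume eps: "2 powr inv_exp q < eps"
  define \<rho> where "\<rho> = eps / 2 powr inv_exp q"
  have \<rho>: "1 < \<rho>" using eps by (simp add: \<rho>_def)
  define Cov where "Cov i k C \<longleftrightarrow> finite C \<and> card C \<le> 2 ^ (k - 1) \<and> C \<subseteq> VY i \<and>
      Tc i ` {x\<in>VX i. NX i x \<le> 1}
        \<subseteq> (\<Union>c\<in>C. {y\<in>VY i. NY i (y - c) \<le> \<rho> * (real m / k) powr (1 / r - inv_exp q)})" for i k C
  have Cov_ex: "\<exists>C. Cov i k C" if i: "i \<in> {1..m}" and k: "k \<in> {1..m}" for i k
  proof -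
    have "(real m / k) powr (1 / r - inv_exp q) < \<rho> * (real m / k) powr (1 / r - inv_exp q)"
      using \<rho> k by simp
    with ent[OF i k] obtain C where "finite C" "card C \<le> 2 ^ (k - 1)" "C \<subseteq> VY i"
      "Tc i ` {x\<in>VX i. NX i x \<le> 1}
         \<subseteq> (\<Union>c\<in>C. {y\<in>VY i. NY i (y - c) \<le> \<rho> * (real m / k) powr (1 / r - inv_exp q)})"
      by (elim entropy_number_less_cover[OF X[OF i] Y[OF i] T[OF i] le_less_trans])
    thus ?thesis unfolding Cov_def by blast
  qed
  define Cf where "Cf i k = (SOME C. Cov i k C)" for i k
  have Cf: "Cov i k (Cf i k)" if "i \<in> {1..m}" "k \<in> {1..m}" for i k
    unfolding Cf_def by (rule someI_ex[OF Cov_ex[OF that]])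
  have "finite (diag_centres m r Cf)" and card: "card (diag_centres m r Cf) \<le> 2 ^ (4 * m)"
    using card_diag_centres[of m Cf r] Cf unfolding Cov_def by auto
  moreover have "card (diag_centres m r Cf) \<le> 2 ^ (5 * m - 1)"
    using card power_increasing[of "4 * m" "5 * m - 1" "2::nat"] m by linarith
  moreover have "diag_centres m r Cf \<subseteq> lp_carrier m VY"
    using Cf quasi_normedD(1)[OF Y] unfolding Cov_def by (intro diag_centres_subset) auto
  moreover have "(\<lambda>x i. if i \<in> {1..m} then Tc i (x i) else 0) ` {x\<in>lp_carrier m VX. lp_qnorm (ereal r) m NX x \<le> 1}
      \<subseteq> (\<Union>c\<in>diag_centres m r Cf. {y\<in>lp_carrier m VY. lp_qnorm q m NY (y - c) \<le> \<rho> * 2 powr inv_exp q})"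
    using m r q \<rho> X Y T Cf unfolding Cov_def by (intro diag_cover) auto
  moreover have "\<rho> * 2 powr inv_exp q = eps" by (simp add: \<rho>_def)
  ultimately show "\<exists>C. finite C \<and> card C \<le> 2 ^ (5 * m - 1) \<and> C \<subseteq> lp_carrier m VY \<and>
      (\<lambda>x i. if i \<in> {1..m} then Tc i (x i) else 0) ` {x\<in>lp_carrier m VX. lp_qnorm (ereal r) m NX x \<le> 1}
        \<subseteq> (\<Union>c\<in>C. {y\<in>lp_carrier m VY. lp_qnorm q m NY (y - c) \<le> eps})"
    by (intro exI[of _ "diag_centres m r Cf"] conjI) simp_all
qed simp

theorem lemma2p3:
  fixes m :: nat and p q :: ereal
    and VX :: "nat \<Rightarrow> 'a::real_vector set" and NX :: "nat \<Rightarrow> 'a \<Rightarrow> real"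
    and VY :: "nat \<Rightarrow> 'b::real_vector set" and NY :: "nat \<Rightarrow> 'b \<Rightarrow> real"
    and Tc :: "nat \<Rightarrow> 'a \<Rightarrow> 'b"
  assumes m: "m \<ge> 2"
    and p: "0 < p" and pq: "p < q"
    and X: "\<And>i. i \<in> {1..m} \<Longrightarrow> quasi_banach (VX i) (NX i)"
    and Y: "\<And>i. i \<in> {1..m} \<Longrightarrow> quasi_banach (VY i) (NY i)"
    and T: "\<And>i. i \<in> {1..m} \<Longrightarrow> bounded_linear_op (VX i) (NX i) (VY i) (NY i) (Tc i)"
    and ent: "\<And>i s. i \<in> {1..m} \<Longrightarrow> s \<in> {1..m} \<Longrightarrow>
       entropy_number (VX i) (NX i) (VY i) (NY i) (Tc i) s
         \<le> (real m / real s) powr (inv_exp p - inv_exp q)"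
  shows "entropy_number (lp_carrier m VX) (lp_qnorm p m NX) (lp_carrier m VY) (lp_qnorm q m NY)
           (\<lambda>x i. if i \<in> {1..m} then Tc i (x i) else 0) (5 * m)
         \<le> (if q = \<infinity> then 1 else 3 powr inv_exp q)"
proof -
  obtain r where p_r: "p = ereal r" and r: "0 < r" using p pq by (cases p) auto
  have q: "0 < q" using p pq by simp
  have "entropy_number (lp_carrier m VX) (lp_qnorm p m NX) (lp_carrier m VY) (lp_qnorm q m NY)
           (\<lambda>x i. if i \<in> {1..m} then Tc i (x i) else 0) (5 * m) \<le> 2 powr inv_exp q"
    unfolding p_r using m r q X Y T ent
    by (intro entropy_number_diag_le) (auto simp: quasi_banach_def p_r inv_exp_def)
  also have "\<dots> \<le> 3 powr inv_exp q"
    using q by (intro powr_mono2) (auto simp: inv_exp_def real_of_ereal_pos)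
  also have "\<dots> = (if q = \<infinity> then 1 else 3 powr inv_exp q)"
    by (simp add: inv_exp_def)
  finally show ?thesis .
qed

end
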